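(* Let $Y$ be a countable linear order, $F=\{a_0<\dots<a_{m-1}\}\in\mathsf{age}(Y)$, and $\alpha$ an ordinal. Then $\mathsf{rk}_Y(F)\ge\alpha$ if and only if $\mathsf{rk}(I_j)\ge\alpha$ for every interval $I_j$ ($0\le j\le m$) of $F$ in $Y$, each interval being regarded as a linear order in its own right. In particular, $\mathsf{rk}_Y(F)=\min\{\mathsf{rk}(I_j):0\le j\le m\}$.
   Context: The intervals of $F=\{a_0<\dots<a_{m-1}\}$ in $Y$ are $I_0=\{y\in Y:y<a_0\}$, $I_k=\{y\in Y:a_{k-1}<y<a_k\}$ for $1\le k\le m-1$, and $I_m=\{y\in Y:y>a_{m-1}\}$; if $F=\emptyset$ there is the single interval $I_0=Y$. Let $\mathcal F$ be the class of finite linear orders (language $\{<\}$); countable linear orders are the structures considered; substructures are suborders and $\mathsf{age}(X)$ is the set of finite suborders of $X$. For $A\le B$, $B$ is a prime extension of $A$ if $|B\setminus A|=1$; a realization of $B$ in $X$ (where $A\le X$) is $C\le X$ with $A\le C$ and an order-isomorphism $B\to C$ fixing $A$ pointwise. For $F\in\mathsf{age}(X)$ define by recursion: $\mathsf{rk}_X(F)\ge0$ always; $\mathsf{rk}_X(F)\ge\alpha+1$ iff every prime extension $B\in\mathcal F$ of $F$ has a realization $C$ in $X$ with $\mathsf{rk}_X(C)\ge\alpha$; for limit $\alpha$, $\mathsf{rk}_X(F)\ge\alpha$ iff $\mathsf{rk}_X(F)\ge\beta$ for all $\beta<\alpha$. $\mathsf{rk}_X(F)=\sup\{\alpha:\mathsf{rk}_X(F)\ge\alpha\}$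 (or $\infty$, larger than all ordinals), and $\mathsf{rk}(X)=\mathsf{rk}_X(\emptyset)$. *)

theory Defs
  imports "HOL-Library.Countable_Set"
begin

text \<open>A countable linear order is represented as a countable carrier set Y of a
linearly ordered type, with the induced order; suborders are subsets with the
induced order. A finite linear order B extending A by one point is represented,
up to isomorphism over A, by a strict linear order on insert None (Some ` A).\<close>

definition strict_linear_on :: "'b set \<Rightarrow> ('b \<Rightarrow> 'b \<Rightarrow> bool) \<Rightarrow> bool" where
  "strict_linear_on S s \<longleftrightarrow>
     (\<forall>x\<in>S. \<not> s x x) \<and>
     (\<forall>x\<in>S. \<forall>y\<in>S. \<forall>z\<in>S. s x y \<longrightarrow> s y z \<longrightarrow> s x z) \<and>
     (\<forall>x\<in>S. \<forall>y\<in>S. x \<noteq> y \<longrightarrow> s x y \<or> s y x)"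

definition prime_ext :: "'a::linorder set \<Rightarrow> ('a option \<Rightarrow> 'a option \<Rightarrow> bool) \<Rightarrow> bool" where
  "prime_ext A s \<longleftrightarrow> strict_linear_on (insert None (Some ` A)) s \<and>
     (\<forall>x\<in>A. \<forall>y\<in>A. s (Some x) (Some y) \<longleftrightarrow> x < y)"

definition realizes :: "'a::linorder set \<Rightarrow> 'a set \<Rightarrow> ('a option \<Rightarrow> 'a option \<Rightarrow> bool) \<Rightarrow> 'a set \<Rightarrow> bool" where
  "realizes X A s C \<longleftrightarrow> A \<subseteq> C \<and> C \<subseteq> X \<and>
     (\<exists>f. bij_betw f (insert None (Some ` A)) C \<and> (\<forall>x\<in>A. f (Some x) = x) \<and>
          (\<forall>u\<in>insert None (Some ` A). \<forall>v\<in>insert None (Some ` A). s u v \<longleftrightarrow> f u < f v))"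

text \<open>Ordinals are elements of an arbitrary well-ordered type 'o.
alpha is the successor of beta.\<close>
definition is_succ_of :: "'o::wellorder \<Rightarrow> 'o \<Rightarrow> bool" where
  "is_succ_of \<alpha> \<beta> \<longleftrightarrow> \<beta> < \<alpha> \<and> (\<forall>\<gamma>. \<gamma> < \<alpha> \<longrightarrow> \<gamma> \<le> \<beta>)"

text \<open>rk_ge X alpha F means rk_X(F) \<ge> alpha. The recursion on alpha is well-founded,
so the least fixed point below is the recursively defined predicate.
The rule lim covers alpha = 0 (vacuously) and limit alpha.\<close>
inductive rk_ge :: "'a::linorder set \<Rightarrow> 'o::wellorder \<Rightarrow> 'a set \<Rightarrow> bool" for X where
  lim: "(\<nexists>\<beta>. is_succ_of \<alpha> \<beta>) \<Longrightarrow> (\<forall>\<beta><\<alpha>. rk_ge X \<beta> F) \<Longrightarrow> rk_ge X \<alpha> F"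
| succ: "is_succ_of \<alpha> \<beta> \<Longrightarrow>
     (\<forall>s. prime_ext F s \<longrightarrow> (\<exists>C. realizes X F s C \<and> rk_ge X \<beta> C)) \<Longrightarrow> rk_ge X \<alpha> F"

text \<open>rk_X(F), represented as the down-closed set of ordinals alpha (in 'o) with
rk_X(F) \<ge> alpha; the value \<infinity> corresponds to UNIV. rk(X) = rk_X({}).\<close>
definition rk :: "'a::linorder set \<Rightarrow> 'a set \<Rightarrow> 'o::wellorder set" where
  "rk X F = {\<alpha>. rk_ge X \<alpha> F}"

definition interval :: "'a::linorder set \<Rightarrow> 'a set \<Rightarrow> nat \<Rightarrow> 'a set" where
  "interval Y F j = (let a = sorted_list_of_set F; m = length a in
     {y\<in>Y. (j = 0 \<or> a ! (j - 1) < y) \<and> (j = m \<or> y < a ! j)})"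

end

theory Submission
  imports Defs
begin

(*
  Call a point of Y - F a point of the j-th gap of F if exactly j points of F lie below it;
  for j <= |F| this gap is the interval I_j. A prime extension of F is determined by how many
  points of F lie below the new point, so it is realized exactly by the points of the
  corresponding gap, and adding a point c of I_j to F splits I_j at c and leaves the other
  gaps unchanged. By induction on the ordinal, at a successor stage:
  rk_Y(F) >= beta + 1 iff every I_j contains a c such that all gaps of F + c have rank
  >= beta, iff every I_j contains a c such that the parts of I_j below and above c have rank
  >= beta (the other gaps then have rank >= beta + 1 >= beta, since rank conditions are
  downward closed), iff every I_j has rank >= beta + 1, by the same argument applied to the
  empty suborder of I_j.
*)

section \<open>Gaps of a finite set\<close>

definition num_below :: "'a::linorder set \<Rightarrow> 'a \<Rightarrow> nat" where
  "num_below F y = card {x\<in>F. x < y}"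

definition gap :: "'a::linorder set \<Rightarrow> 'a set \<Rightarrow> nat \<Rightarrow> 'a set" where
  "gap Y F j = {y\<in>Y. y \<notin> F \<and> num_below F y = j}"

lemma num_below_le_card: "finite F \<Longrightarrow> num_below F y \<le> card F"
  unfolding num_below_def by (rule card_mono) auto

lemma num_below_less_card: "finite F \<Longrightarrow> x \<in> F \<Longrightarrow> num_below F x < card F"
  unfolding num_below_def by (rule psubset_card_mono) auto

lemma num_below_mono: "finite F \<Longrightarrow> x \<le> y \<Longrightarrow> num_below F x \<le> num_below F y"
  unfolding num_below_def by (rule card_mono) auto

lemma num_below_strict_mono: "finite F \<Longrightarrow> x \<in> F \<Longrightarrow> x < y \<Longrightarrow> num_below F x < num_below F y"
  unfolding num_below_def by (rule psubset_card_mono) auto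

lemma num_below_less_iff:
  "finite F \<Longrightarrow> x \<in> F \<Longrightarrow> num_below F x < num_below F y \<longleftrightarrow> x < y"
  using num_below_strict_mono num_below_mono by (metis leD linorder_le_less_linear)

lemma inj_on_num_below:
  assumes "finite F"
  shows "inj_on (num_below F) F"
proof (rule inj_onI)
  fix x y assume "x \<in> F" "y \<in> F" "num_below F x = num_below F y"
  then show "x = y"
    using num_below_strict_mono[OF assms, of x y] num_below_strict_mono[OF assms, of y x]
    by (cases x y rule: linorder_cases) simp_all
qed

lemma sorted_nth_mem: "finite F \<Longrightarrow> i < card F \<Longrightarrow> sorted_list_of_set F ! i \<in> F"
  by (metis length_sorted_list_of_set nth_mem set_sorted_list_of_set)

lemma ex_sorted_nth_eq: "finite F \<Longrightarrow> x \<in> F \<Longrightarrow> \<exists>k<card F. sorted_list_of_set F ! k = x"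
  by (metis in_set_conv_nth length_sorted_list_of_set set_sorted_list_of_set)

lemma num_below_sorted_nth:
  assumes "finite F" "i < card F"
  shows "num_below F (sorted_list_of_set F ! i) = i"
proof -
  let ?a = "sorted_list_of_set F"
  have nth_less_iff: "?a ! k < ?a ! i \<longleftrightarrow> k < i" if "k < card F" for k
    using sorted_wrt_nth_less[OF sorted_list_of_set.strict_sorted_key_list_of_set, of k i F]
      sorted_wrt_nth_less[OF sorted_list_of_set.strict_sorted_key_list_of_set, of i k F] that assms
    by (cases k i rule: linorder_cases) auto
  have "{x\<in>F. x < ?a ! i} = (!) ?a ` {0..<i}"
  proof (intro equalityI subsetI)
    fix x assume "x \<in> {x\<in>F. x < ?a ! i}"
    then obtain k where "k < card F" "?a ! k = x" "x < ?a ! i"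
      using ex_sorted_nth_eq[OF assms(1)] by blast
    then show "x \<in> (!) ?a ` {0..<i}"
      using nth_less_iff by auto
  next
    fix x assume "x \<in> (!) ?a ` {0..<i}"
    then show "x \<in> {x\<in>F. x < ?a ! i}"
      using nth_less_iff assms sorted_nth_mem[OF assms(1)] by auto
  qed
  also have "\<dots> = set (take i ?a)"
    using assms by (simp add: nth_image)
  finally show ?thesis
    using assms(2) by (simp add: num_below_def distinct_card)
qed

lemma sorted_nth_num_below:
  assumes "finite F" "y \<in> F"
  shows "sorted_list_of_set F ! num_below F y = y"
  using ex_sorted_nth_eq[OF assms] num_below_sorted_nth[OF assms(1)] by auto

lemma sorted_nth_less_iff:
  assumes "finite F" "i < card F"
  shows "sorted_list_of_set F ! i < y \<longleftrightarrow> i < num_below F y"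
  using num_below_less_iff[OF assms(1) sorted_nth_mem[OF assms]] num_below_sorted_nth[OF assms]
  by simp

lemma card_num_below_less:
  assumes "finite F" "j \<le> card F"
  shows "card {x\<in>F. num_below F x < j} = j"
proof -
  have "num_below F ` {x\<in>F. num_below F x < j} = {..<j}"
  proof
    show "{..<j} \<subseteq> num_below F ` {x\<in>F. num_below F x < j}"
    proof
      fix k assume "k \<in> {..<j}"
      then have "k < card F" using assms(2) by simp
      then have "sorted_list_of_set F ! k \<in> F" "num_below F (sorted_list_of_set F ! k) = k"
        using sorted_nth_mem[OF assms(1)] num_below_sorted_nth[OF assms(1)] by auto
      then show "k \<in> num_below F ` {x\<in>F. num_below F x < j}"
        using \<open>k \<in> {..<j}\<close> by force
    qed
  qed auto
  moreover have "inj_on (num_below F) {x\<in>F. num_below F x < j}"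
    using inj_on_num_below[OF assms(1)] by (rule inj_on_subset) auto
  ultimately show ?thesis
    by (metis card_image card_lessThan)
qed

lemma interval_eq_gap:
  assumes "finite F" "j \<le> card F"
  shows "interval Y F j = gap Y F j"
proof (rule set_eqI)
  fix y
  let ?a = "sorted_list_of_set F"
  have above: "?a ! (j - 1) < y \<longleftrightarrow> j \<le> num_below F y" if "j \<noteq> 0"
  proof -
    have "j - 1 < card F" using that assms(2) by simp
    then show ?thesis using sorted_nth_less_iff[OF assms(1), of "j - 1" y] that by linarith
  qed
  have below: "y < ?a ! j \<longleftrightarrow> num_below F y < j \<or> num_below F y = j \<and> y \<notin> F"
    if "j < card F"
  proof -
    have "?a ! j \<in> F"
      using sorted_nth_mem[OF assms(1) that] .
    then have "y = ?a ! j \<longleftrightarrow> y \<in> F \<and> num_below F y = j"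
      using sorted_nth_num_below[OF assms(1)] num_below_sorted_nth[OF assms(1) that] by auto
    then show ?thesis
      using sorted_nth_less_iff[OF assms(1) that, of y] by auto
  qed
  show "y \<in> interval Y F j \<longleftrightarrow> y \<in> gap Y F j"
    using above below num_below_le_card[OF assms(1), of y] num_below_less_card[OF assms(1), of y]
      assms(2)
    unfolding interval_def gap_def Let_def
    by (cases "j = 0"; cases "j = card F") auto
qed

lemma num_below_insert:
  assumes "finite F" "c \<notin> F"
  shows "num_below (insert c F) y = num_below F y + (if c < y then 1 else 0)"
proof -
  have "{x\<in>insert c F. x < y} = (if c < y then insert c {x\<in>F. x < y} else {x\<in>F. x < y})"
    by auto
  then show ?thesis
    using assms by (simp add: num_below_def)
qed

lemma gap_empty: "gap X {} 0 = X"
  by (simp add: gap_def num_below_def)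

lemma gap_singleton:
  "gap X {c} 0 = {y\<in>X. y < c}" "gap X {c} (Suc 0) = {y\<in>X. c < y}"
  using num_below_insert[of "{}" c] by (auto simp: gap_def gap_empty num_below_def)

lemma gap_insert:
  assumes "finite F" "c \<in> gap Y F j"
  shows "gap Y (insert c F) k =
    (if k < j then gap Y F k else if k = j then {y\<in>gap Y F j. y < c}
     else if k = Suc j then {y\<in>gap Y F j. c < y} else gap Y F (k - 1))"
proof (rule set_eqI)
  fix y
  have "c \<notin> F" "num_below F c = j"
    using assms(2) by (auto simp: gap_def)
  have "y < c \<Longrightarrow> num_below F y \<le> j" "c < y \<Longrightarrow> j \<le> num_below F y"
    using num_below_mono[OF assms(1)] \<open>num_below F c = j\<close> by (metis less_imp_le)+
  then show "y \<in> gap Y (insert c F) k \<longleftrightarrow> y \<in> (if k < j then gap Y F k else if k = j then {y\<in>gap Y F j. y < c}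
     else if k = Suc j then {y\<in>gap Y F j. c < y} else gap Y F (k - 1))"
    using num_below_insert[OF assms(1) \<open>c \<notin> F\<close>, of y] \<open>num_below F c = j\<close>
    by (cases y c rule: linorder_cases) (auto simp: gap_def)
qed

lemma all_gaps_insert_iff:
  assumes "finite F" "c \<in> gap Y F j" "j \<le> card F"
  shows "(\<forall>k\<le>Suc (card F). P (gap Y (insert c F) k)) \<longleftrightarrow>
         P {y\<in>gap Y F j. y < c} \<and> P {y\<in>gap Y F j. c < y} \<and> (\<forall>k\<le>card F. k \<noteq> j \<longrightarrow> P (gap Y F k))"
proof
  assume all: "\<forall>k\<le>Suc (card F). P (gap Y (insert c F) k)"
  have "P (gap Y F k)" if "k \<le> card F" "k \<noteq> j" for k
  proof (cases "k < j")
    case True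
    then show ?thesis using all[rule_format, of k] gap_insert[OF assms(1,2), of k] that by simp
  next
    case False
    then show ?thesis using all[rule_format, of "Suc k"] gap_insert[OF assms(1,2), of "Suc k"] that by simp
  qed
  then show "P {y\<in>gap Y F j. y < c} \<and> P {y\<in>gap Y F j. c < y} \<and> (\<forall>k\<le>card F. k \<noteq> j \<longrightarrow> P (gap Y F k))"
    using all[rule_format, of j] all[rule_format, of "Suc j"] assms(3)
      gap_insert[OF assms(1,2), of j] gap_insert[OF assms(1,2), of "Suc j"] by simp
next
  assume "P {y\<in>gap Y F j. y < c} \<and> P {y\<in>gap Y F j. c < y} \<and> (\<forall>k\<le>card F. k \<noteq> j \<longrightarrow> P (gap Y F k))"
  then show "\<forall>k\<le>Suc (card F). P (gap Y (insert c F) k)"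
    using gap_insert[OF assms(1,2)] assms(3) by auto
qed

section \<open>Prime extensions\<close>

lemma strict_linear_on_flip:
  assumes "strict_linear_on S s" "x \<in> S" "y \<in> S" "x \<noteq> y"
  shows "s y x \<longleftrightarrow> \<not> s x y"
  using assms unfolding strict_linear_on_def by metis

lemma realizes_insert:
  assumes ext: "prime_ext F s" and "F \<subseteq> X" "c \<in> X" "c \<notin> F"
    and cut: "\<forall>x\<in>F. s (Some x) None \<longleftrightarrow> x < c"
  shows "realizes X F s (insert c F)"
proof -
  let ?S = "insert None (Some ` F)"
  define f where "f = case_option c id"
  have "bij_betw f ?S (insert c F)"
    unfolding bij_betw_def inj_on_def f_def using \<open>c \<notin> F\<close> by (auto simp: image_image)
  moreover have "s u v \<longleftrightarrow> f u < f v" if "u \<in> ?S" "v \<in> ?S" for u v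
  proof -
    have lin: "strict_linear_on ?S s" and ord: "\<forall>x\<in>F. \<forall>y\<in>F. s (Some x) (Some y) \<longleftrightarrow> x < y"
      using ext unfolding prime_ext_def by blast+
    have "\<not> s None None"
      using lin unfolding strict_linear_on_def by blast
    moreover have "s None (Some y) \<longleftrightarrow> c < y" if "y \<in> F" for y
    proof -
      have "y \<noteq> c" using that \<open>c \<notin> F\<close> by blast
      then show ?thesis
        using strict_linear_on_flip[OF lin, of "Some y" None] cut that by (auto simp: neq_iff)
    qed
    ultimately show ?thesis
      using that ord cut by (cases u; cases v) (auto simp: f_def)
  qed
  ultimately show ?thesis
    unfolding realizes_def f_def using \<open>F \<subseteq> X\<close> \<open>c \<in> X\<close> by auto
qed

lemma realizes_iff_insert:
  assumes ext: "prime_ext F s" and "F \<subseteq> X"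
  shows "realizes X F s C \<longleftrightarrow>
    (\<exists>c\<in>X. c \<notin> F \<and> C = insert c F \<and> (\<forall>x\<in>F. s (Some x) None \<longleftrightarrow> x < c))"
proof
  let ?S = "insert None (Some ` F)"
  assume "realizes X F s C"
  then obtain f where "C \<subseteq> X" and bij: "bij_betw f ?S C"
    and fixes_F: "\<forall>x\<in>F. f (Some x) = x" and iso: "\<forall>u\<in>?S. \<forall>v\<in>?S. s u v \<longleftrightarrow> f u < f v"
    unfolding realizes_def by blast
  have "f None \<notin> F"
    using fixes_F bij_betw_imp_inj_on[OF bij]
    by (metis inj_on_contraD insertCI image_eqI option.distinct(1))
  moreover have "C = insert (f None) F"
    using bij_betw_imp_surj_on[OF bij] fixes_F by (auto simp: image_image)
  ultimately show "\<exists>c\<in>X. c \<notin> F \<and> C = insert c F \<and> (\<forall>x\<in>F. s (Some x) None \<longleftrightarrow> x < c)"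
    using \<open>C \<subseteq> X\<close> iso fixes_F by auto
qed (use realizes_insert[OF assms] in blast)

lemma prime_ext_below_None_trans:
  assumes "prime_ext F s" "x \<in> F" "y \<in> F" "y < x" "s (Some x) None"
  shows "s (Some y) None"
  using assms unfolding prime_ext_def strict_linear_on_def by blast

lemma down_closed_eq_if_card_eq:
  fixes D E :: "'a::linorder set"
  assumes "finite F" "D \<subseteq> F" "E \<subseteq> F" "card D = card E"
    and "\<And>x y. x \<in> D \<Longrightarrow> y \<in> F \<Longrightarrow> y < x \<Longrightarrow> y \<in> D"
    and "\<And>x y. x \<in> E \<Longrightarrow> y \<in> F \<Longrightarrow> y < x \<Longrightarrow> y \<in> E"
  shows "D = E"
proof -
  have "D \<subseteq> E \<or> E \<subseteq> D"
  proof (rule ccontr)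
    assume "\<not> (D \<subseteq> E \<or> E \<subseteq> D)"
    then obtain x y where "x \<in> D" "x \<notin> E" "y \<in> E" "y \<notin> D" by blast
    then show False
      using assms(2,3,5,6) by (cases x y rule: linorder_cases) blast+
  qed
  moreover have "finite D" "finite E"
    using assms(1-3) finite_subset by auto
  ultimately show ?thesis
    using assms(4) card_subset_eq by metis
qed

lemma realizes_iff_gap:
  assumes ext: "prime_ext F s" and "finite F" "F \<subseteq> X"
  shows "realizes X F s C \<longleftrightarrow> (\<exists>c\<in>gap X F (card {x\<in>F. s (Some x) None}). C = insert c F)"
proof -
  let ?D = "{x\<in>F. s (Some x) None}"
  have cut_iff: "(\<forall>x\<in>F. s (Some x) None \<longleftrightarrow> x < c) \<longleftrightarrow> num_below F c = card ?D" for c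
  proof
    assume "\<forall>x\<in>F. s (Some x) None \<longleftrightarrow> x < c"
    then have "{x\<in>F. x < c} = ?D" by auto
    then show "num_below F c = card ?D" by (simp add: num_below_def)
  next
    assume "num_below F c = card ?D"
    then have "{x\<in>F. x < c} = ?D"
      using prime_ext_below_None_trans[OF ext] \<open>finite F\<close>
      by (intro down_closed_eq_if_card_eq[of F]) (auto simp: num_below_def)
    then show "\<forall>x\<in>F. s (Some x) None \<longleftrightarrow> x < c" by blast
  qed
  show ?thesis
    unfolding realizes_iff_insert[OF ext \<open>F \<subseteq> X\<close>] gap_def using cut_iff by auto
qed

lemma prime_ext_with_cut:
  assumes "finite F" "j \<le> card F"
  obtains s where "prime_ext F s" "card {x\<in>F. s (Some x) None} = j"
proof -
  \<comment> \<open>odd keys order \<open>F\<close>, the even key \<open>2 * j\<close> puts the new point right above \<open>j\<close> of them\<close>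
  define key where "key u = (case u of None \<Rightarrow> 2 * j | Some x \<Rightarrow> 2 * num_below F x + 1)" for u
  define s where "s u v \<longleftrightarrow> key u < key v" for u v
  have "inj_on key (insert None (Some ` F))"
    using inj_on_num_below[OF assms(1)] unfolding inj_on_def key_def by (auto; presburger)
  then have "strict_linear_on (insert None (Some ` F)) s"
    unfolding strict_linear_on_def s_def inj_on_def by (metis less_trans less_irrefl linorder_neqE_nat)
  moreover have "\<forall>x\<in>F. \<forall>y\<in>F. s (Some x) (Some y) \<longleftrightarrow> x < y"
    using num_below_less_iff[OF assms(1)] by (simp add: s_def key_def)
  moreover have "{x\<in>F. s (Some x) None} = {x\<in>F. num_below F x < j}"
    by (auto simp: s_def key_def)
  ultimately show ?thesis
    using that card_num_below_less[OF assms] unfolding prime_ext_def by auto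
qed

lemma prime_exts_realized_iff_gaps:
  assumes "finite F" "F \<subseteq> X"
  shows "(\<forall>s. prime_ext F s \<longrightarrow> (\<exists>C. realizes X F s C \<and> P C)) \<longleftrightarrow>
         (\<forall>j\<le>card F. \<exists>c\<in>gap X F j. P (insert c F))"
proof -
  have "(\<forall>s. prime_ext F s \<longrightarrow> (\<exists>C. realizes X F s C \<and> P C)) \<longleftrightarrow>
        (\<forall>s. prime_ext F s \<longrightarrow> (\<exists>c\<in>gap X F (card {x\<in>F. s (Some x) None}). P (insert c F)))"
    using realizes_iff_gap[OF _ assms] by (metis (no_types, lifting))
  also have "\<dots> \<longleftrightarrow> (\<forall>j\<le>card F. \<exists>c\<in>gap X F j. P (insert c F))"
  proof
    assume "\<forall>s. prime_ext F s \<longrightarrow> (\<exists>c\<in>gap X F (card {x\<in>F. s (Some x) None}). P (insert c F))"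
    then show "\<forall>j\<le>card F. \<exists>c\<in>gap X F j. P (insert c F)"
      using prime_ext_with_cut[OF assms(1)] by metis
  next
    assume "\<forall>j\<le>card F. \<exists>c\<in>gap X F j. P (insert c F)"
    moreover have "card {x\<in>F. s (Some x) None} \<le> card F" for s
      using assms(1) by (intro card_mono) auto
    ultimately show "\<forall>s. prime_ext F s \<longrightarrow> (\<exists>c\<in>gap X F (card {x\<in>F. s (Some x) None}). P (insert c F))"
      by blast
  qed
  finally show ?thesis .
qed

section \<open>Rank\<close>

lemma is_succ_of_unique: "is_succ_of \<alpha> \<beta> \<Longrightarrow> is_succ_of \<alpha> \<gamma> \<Longrightarrow> \<beta> = \<gamma>"
  unfolding is_succ_of_def by (meson order.antisym)

lemma rk_ge_lim_iff:
  assumes "\<nexists>\<beta>. is_succ_of \<alpha> \<beta>"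
  shows "rk_ge X \<alpha> F \<longleftrightarrow> (\<forall>\<beta><\<alpha>. rk_ge X \<beta> F)"
proof
  assume "rk_ge X \<alpha> F"
  then show "\<forall>\<beta><\<alpha>. rk_ge X \<beta> F"
    using assms by (cases rule: rk_ge.cases) blast+
qed (rule rk_ge.lim[OF assms])

lemma rk_ge_succ_iff:
  assumes "is_succ_of \<alpha> \<beta>"
  shows "rk_ge X \<alpha> F \<longleftrightarrow> (\<forall>s. prime_ext F s \<longrightarrow> (\<exists>C. realizes X F s C \<and> rk_ge X \<beta> C))"
proof
  assume "rk_ge X \<alpha> F"
  then show "\<forall>s. prime_ext F s \<longrightarrow> (\<exists>C. realizes X F s C \<and> rk_ge X \<beta> C)"
    using assms is_succ_of_unique[OF assms] by (cases rule: rk_ge.cases) blast+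
qed (rule rk_ge.succ[OF assms])

lemma rk_ge_mono:
  fixes \<alpha> \<beta> :: "'o::wellorder"
  shows "rk_ge X \<alpha> F \<Longrightarrow> \<beta> \<le> \<alpha> \<Longrightarrow> rk_ge X \<beta> F"
proof (induction \<beta> arbitrary: \<alpha> F rule: less_induct)
  case (less \<beta>)
  show ?case
  proof (cases "\<exists>\<gamma>. is_succ_of \<beta> \<gamma>")
    case False
    then show ?thesis
      using less by (auto simp: rk_ge_lim_iff)
  next
    case True
    then obtain \<gamma> where \<gamma>: "is_succ_of \<beta> \<gamma>" ..
    show ?thesis
    proof (cases "\<exists>\<alpha>'. is_succ_of \<alpha> \<alpha>'")
      case False
      then show ?thesis
        using less.prems rk_ge_lim_iff[OF False, of X F] by (auto simp: le_less)
    next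
      case True
      then obtain \<alpha>' where \<alpha>': "is_succ_of \<alpha> \<alpha>'" ..
      have "\<gamma> < \<beta>" "\<gamma> \<le> \<alpha>'"
        using \<gamma> \<alpha>' less.prems(2) unfolding is_succ_of_def by auto
      have "\<exists>C. realizes X F s C \<and> rk_ge X \<gamma> C" if "prime_ext F s" for s
        using less.prems(1) that less.IH[OF \<open>\<gamma> < \<beta>\<close> _ \<open>\<gamma> \<le> \<alpha>'\<close>] rk_ge_succ_iff[OF \<alpha>'] by blast
      then show ?thesis
        using rk_ge_succ_iff[OF \<gamma>] by blast
    qed
  qed
qed

lemma rk_ge_succ_iff_gaps:
  assumes "is_succ_of \<alpha> \<beta>" "finite F" "F \<subseteq> Y"
  shows "rk_ge Y \<alpha> F \<longleftrightarrow> (\<forall>j\<le>card F. \<exists>c\<in>gap Y F j. rk_ge Y \<beta> (insert c F))"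
  using rk_ge_succ_iff[OF assms(1), of Y F] prime_exts_realized_iff_gaps[OF assms(2,3), of "rk_ge Y \<beta>"]
  by simp

lemma rk_ge_succ_empty_iff:
  assumes "is_succ_of \<alpha> \<beta>"
  shows "rk_ge X \<alpha> {} \<longleftrightarrow> (\<exists>c\<in>X. rk_ge X \<beta> {c})"
  using rk_ge_succ_iff_gaps[OF assms, of "{}" X] by (simp add: gap_empty)

lemma rk_ge_iff_gaps_succ_step:
  fixes \<alpha> \<beta> :: "'o::wellorder" and Y F :: "'a::linorder set"
  assumes succ: "is_succ_of \<alpha> \<beta>" and "finite F" "F \<subseteq> Y"
    and IH: "\<And>Z G :: 'a set. finite G \<Longrightarrow> G \<subseteq> Z \<Longrightarrow>
      rk_ge Z \<beta> G \<longleftrightarrow> (\<forall>j\<le>card G. rk_ge (gap Z G j) \<beta> {})"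
  shows "rk_ge Y \<alpha> F \<longleftrightarrow> (\<forall>j\<le>card F. rk_ge (gap Y F j) \<alpha> {})"
proof -
  let ?lower = "\<lambda>j c. rk_ge {y\<in>gap Y F j. y < c} \<beta> {}"
  let ?upper = "\<lambda>j c. rk_ge {y\<in>gap Y F j. c < y} \<beta> {}"
  let ?others = "\<lambda>j. \<forall>k\<le>card F. k \<noteq> j \<longrightarrow> rk_ge (gap Y F k) \<beta> {}"
  have extend: "rk_ge Y \<alpha> F \<longleftrightarrow> (\<forall>j\<le>card F. \<exists>c\<in>gap Y F j. ?lower j c \<and> ?upper j c \<and> ?others j)"
  proof -
    have rank_insert_iff: "rk_ge Y \<beta> (insert c F) \<longleftrightarrow> ?lower j c \<and> ?upper j c \<and> ?others j"
      if "j \<le> card F" "c \<in> gap Y F j" for j c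
      using IH[of "insert c F" Y] all_gaps_insert_iff[OF \<open>finite F\<close> that(2,1), of "\<lambda>Z. rk_ge Z \<beta> {}"]
        that(2) \<open>finite F\<close> \<open>F \<subseteq> Y\<close> by (simp add: gap_def)
    show ?thesis
      unfolding rk_ge_succ_iff_gaps[OF succ \<open>finite F\<close> \<open>F \<subseteq> Y\<close>] by (auto simp: rank_insert_iff)
  qed
  have split: "rk_ge (gap Y F j) \<alpha> {} \<longleftrightarrow> (\<exists>c\<in>gap Y F j. ?lower j c \<and> ?upper j c)" for j
  proof -
    have "rk_ge (gap Y F j) \<beta> {c} \<longleftrightarrow> ?lower j c \<and> ?upper j c" if "c \<in> gap Y F j" for c
      using that IH[of "{c}" "gap Y F j"] by (auto simp: le_Suc_eq gap_singleton)
    then show ?thesis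
      using rk_ge_succ_empty_iff[OF succ, of "gap Y F j"] by blast
  qed
  have "rk_ge (gap Y F j) \<beta> {}" if "rk_ge (gap Y F j) \<alpha> {}" for j
    using that rk_ge_mono succ unfolding is_succ_of_def by (blast intro: less_imp_le)
  then show ?thesis
    unfolding extend split by blast
qed

lemma rk_ge_iff_gaps:
  fixes \<alpha> :: "'o::wellorder"
  assumes "finite F" "F \<subseteq> Y"
  shows "rk_ge Y \<alpha> F \<longleftrightarrow> (\<forall>j\<le>card F. rk_ge (gap Y F j) \<alpha> {})"
  using assms
proof (induction \<alpha> arbitrary: Y F rule: less_induct)
  case (less \<alpha>)
  show ?case
  proof (cases "\<exists>\<beta>. is_succ_of \<alpha> \<beta>")
    case False
    then show ?thesis
      using less.IH[OF _ less.prems] by (auto simp: rk_ge_lim_iff[OF False])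
  next
    case True
    then obtain \<beta> where \<beta>: "is_succ_of \<alpha> \<beta>" ..
    then have "\<beta> < \<alpha>" by (simp add: is_succ_of_def)
    show ?thesis
      using rk_ge_iff_gaps_succ_step[OF \<beta> less.prems less.IH[OF \<open>\<beta> < \<alpha>\<close>]] .
  qed
qed

theorem proposition6p5:
  fixes Y F :: "'a::linorder set" and \<alpha> :: "'o::wellorder"
  assumes "countable Y" and "finite F" and "F \<subseteq> Y"
  shows "(rk_ge Y \<alpha> F \<longleftrightarrow> (\<forall>j\<le>card F. rk_ge (interval Y F j) \<alpha> {}))
         \<and> (rk Y F :: 'o set) = (\<Inter>j\<le>card F. rk (interval Y F j) {})"
proof -
  \<comment> \<open>The argument never uses that \<open>Y\<close> is countable.\<close>
  have "rk_ge Y \<beta> F \<longleftrightarrow> (\<forall>j\<le>card F. rk_ge (interval Y F j) \<beta> {})" for \<beta> :: 'o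
    using rk_ge_iff_gaps[OF assms(2,3)] interval_eq_gap[OF assms(2)] by simp
  then show ?thesis
    unfolding rk_def by auto
qed

end
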